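(* Let $G=(V,E)$ be an atomic bispanning graph with vertex-connectivity $2$ which is the $2$-clique sum of two simple bispanning graphs $G_1=(V_1,E_1)$ and $G_2=(V_2,E_2)$ at edges $d_1\in E_1$ and $d_2\in E_2$ (i.e. $G$ arises from the disjoint union of $G_1,G_2$ by identifying the ends of $d_1$ with those of $d_2$ and deleting $d_1,d_2$). Let $$V_\eta=\{((S_1,T_1),(S_2,T_2))\in V_{\tau(G_1)}\times V_{\tau(G_2)}:\text{not }((d_1\in S_1\text{ and }d_2\in S_2)\text{ or }(d_1\in T_1\text{ and }d_2\in T_2))\}.$$ Then there is a bijection $\varphi_v:V_{\tau(G)}\to V_\eta$.
   Context: Graphs are finite, undirected, may have parallel edges, no loops. A spanning tree of $H$ is an edge set $T$ with $(V(H),T)$ connected and acyclic; $H$ is bispanning if its edge set is the union of two disjoint spanning trees; a bispanning graph is atomic if its only bispanning subgraphs are itself and single vertices. Vertex-connectivity is the largest $k$ with $|V|>k$ such that deleting fewer than $k$ vertices leaves the graph connected. For a bispanning graph $H$, $V_{\tau(H)}$ is the set of ordered pairs $(S,T)$ of disjoint spanning trees of $H$ whose union is the edge set of $H$. *)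

theory Defs
  imports Main
begin

text \<open>Multigraphs: vertex set V, edge set E (edges carry identity, so parallel
edges are allowed), and an incidence map ends assigning to each edge its
two-element set of end vertices (no loops).\<close>

definition multigraph :: "'v set \<Rightarrow> 'e set \<Rightarrow> ('e \<Rightarrow> 'v set) \<Rightarrow> bool" where
  "multigraph V E ends \<longleftrightarrow> finite V \<and> finite E \<and>
     (\<forall>e\<in>E. ends e \<subseteq> V \<and> card (ends e) = 2)"

definition simple_graph :: "'v set \<Rightarrow> 'e set \<Rightarrow> ('e \<Rightarrow> 'v set) \<Rightarrow> bool" where
  "simple_graph V E ends \<longleftrightarrow> multigraph V E ends \<and> inj_on ends E"

definition adj :: "'e set \<Rightarrow> ('e \<Rightarrow> 'v set) \<Rightarrow> 'v \<Rightarrow> 'v \<Rightarrow> bool" where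
  "adj T ends x y \<longleftrightarrow> (\<exists>e\<in>T. ends e = {x, y})"

definition connected_on :: "'v set \<Rightarrow> 'e set \<Rightarrow> ('e \<Rightarrow> 'v set) \<Rightarrow> bool" where
  "connected_on V T ends \<longleftrightarrow> V \<noteq> {} \<and> (\<forall>u\<in>V. \<forall>v\<in>V. (adj T ends)\<^sup>*\<^sup>* u v)"

definition is_cycle :: "'e set \<Rightarrow> ('e \<Rightarrow> 'v set) \<Rightarrow> 'e list \<Rightarrow> 'v list \<Rightarrow> bool" where
  "is_cycle T ends es vs \<longleftrightarrow> length es = length vs \<and> length es \<ge> 1 \<and>
     distinct es \<and> distinct vs \<and> set es \<subseteq> T \<and>
     (\<forall>i<length es. ends (es ! i) = {vs ! i, vs ! ((i + 1) mod length vs)})"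

definition acyclic_on :: "'e set \<Rightarrow> ('e \<Rightarrow> 'v set) \<Rightarrow> bool" where
  "acyclic_on T ends \<longleftrightarrow> \<not> (\<exists>es vs. is_cycle T ends es vs)"

definition spanning_tree :: "'v set \<Rightarrow> 'e set \<Rightarrow> ('e \<Rightarrow> 'v set) \<Rightarrow> 'e set \<Rightarrow> bool" where
  "spanning_tree V E ends T \<longleftrightarrow> T \<subseteq> E \<and> connected_on V T ends \<and> acyclic_on T ends"

text \<open>V_tau(H): ordered pairs of disjoint spanning trees whose union is E.\<close>
definition tree_pairs :: "'v set \<Rightarrow> 'e set \<Rightarrow> ('e \<Rightarrow> 'v set) \<Rightarrow> ('e set \<times> 'e set) set" where
  "tree_pairs V E ends = {(S, T). spanning_tree V E ends S \<and> spanning_tree V E ends T \<and>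
      S \<inter> T = {} \<and> S \<union> T = E}"

definition bispanning :: "'v set \<Rightarrow> 'e set \<Rightarrow> ('e \<Rightarrow> 'v set) \<Rightarrow> bool" where
  "bispanning V E ends \<longleftrightarrow> multigraph V E ends \<and> tree_pairs V E ends \<noteq> {}"

definition subgraph :: "'v set \<Rightarrow> 'e set \<Rightarrow> 'v set \<Rightarrow> 'e set \<Rightarrow> ('e \<Rightarrow> 'v set) \<Rightarrow> bool" where
  "subgraph V' E' V E ends \<longleftrightarrow> V' \<subseteq> V \<and> E' \<subseteq> E \<and> (\<forall>e\<in>E'. ends e \<subseteq> V')"

definition atomic :: "'v set \<Rightarrow> 'e set \<Rightarrow> ('e \<Rightarrow> 'v set) \<Rightarrow> bool" where
  "atomic V E ends \<longleftrightarrow> bispanning V E ends \<and>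
     (\<forall>V' E'. subgraph V' E' V E ends \<and> bispanning V' E' ends \<longrightarrow>
        (V' = V \<and> E' = E) \<or> card V' = 1)"

definition k_connected :: "nat \<Rightarrow> 'v set \<Rightarrow> 'e set \<Rightarrow> ('e \<Rightarrow> 'v set) \<Rightarrow> bool" where
  "k_connected k V E ends \<longleftrightarrow> card V > k \<and>
     (\<forall>X. X \<subseteq> V \<and> card X < k \<longrightarrow> connected_on (V - X) {e\<in>E. ends e \<subseteq> V - X} ends)"

definition vertex_connectivity :: "'v set \<Rightarrow> 'e set \<Rightarrow> ('e \<Rightarrow> 'v set) \<Rightarrow> nat" where
  "vertex_connectivity V E ends = (GREATEST k. k_connected k V E ends)"

text \<open>(V,E,ends) is the 2-clique sum of (V1,E1,ends1) and (V2,E2,ends2) at d1, d2: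
the vertex sets are embedded injectively by f1, f2, overlapping exactly in the
(identified) ends of d1 and d2; the edges are those of E1, E2 except d1, d2
(the edge sets are disjoint), with incidences transported along f1, f2.\<close>
definition two_clique_sum ::
  "'v set \<Rightarrow> 'e set \<Rightarrow> ('e \<Rightarrow> 'v set) \<Rightarrow>
   'v1 set \<Rightarrow> 'e set \<Rightarrow> ('e \<Rightarrow> 'v1 set) \<Rightarrow> 'e \<Rightarrow>
   'v2 set \<Rightarrow> 'e set \<Rightarrow> ('e \<Rightarrow> 'v2 set) \<Rightarrow> 'e \<Rightarrow> bool" where
  "two_clique_sum V E ends V1 E1 ends1 d1 V2 E2 ends2 d2 \<longleftrightarrow>
     d1 \<in> E1 \<and> d2 \<in> E2 \<and> E1 \<inter> E2 = {} \<and> E = (E1 - {d1}) \<union> (E2 - {d2}) \<and>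
     (\<exists>f1 f2. inj_on f1 V1 \<and> inj_on f2 V2 \<and> V = f1 ` V1 \<union> f2 ` V2 \<and>
        f1 ` V1 \<inter> f2 ` V2 = f1 ` ends1 d1 \<and> f2 ` ends2 d2 = f1 ` ends1 d1 \<and>
        (\<forall>e\<in>E1 - {d1}. ends e = f1 ` ends1 e) \<and>
        (\<forall>e\<in>E2 - {d2}. ends e = f2 ` ends2 e))"

definition V_eta ::
  "'v1 set \<Rightarrow> 'e set \<Rightarrow> ('e \<Rightarrow> 'v1 set) \<Rightarrow> 'e \<Rightarrow>
   'v2 set \<Rightarrow> 'e set \<Rightarrow> ('e \<Rightarrow> 'v2 set) \<Rightarrow> 'e \<Rightarrow>
   (('e set \<times> 'e set) \<times> ('e set \<times> 'e set)) set" where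
  "V_eta V1 E1 ends1 d1 V2 E2 ends2 d2 =
     {((S1, T1), (S2, T2)). (S1, T1) \<in> tree_pairs V1 E1 ends1 \<and> (S2, T2) \<in> tree_pairs V2 E2 ends2 \<and>
        \<not> ((d1 \<in> S1 \<and> d2 \<in> S2) \<or> (d1 \<in> T1 \<and> d2 \<in> T2))}"

end

theory Submission
  imports Defs
begin

text \<open>A pair of spanning trees of the sum is built from pairs on the summands by gluing along
  the virtual edges: \<open>((S1,T1),(S2,T2))\<close> goes to \<open>(S1 \<union> S2 - {d1,d2}, T1 \<union> T2 - {d1,d2})\<close>.
  A tree of one summand avoiding its virtual edge, glued to a tree of the other using it, is a
  spanning tree of the sum, which is why pairs in which one tree uses both virtual edges are
  excluded. Conversely a spanning tree \<open>P\<close> of the sum meets \<open>E1\<close> in a forest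
  that becomes connected once \<open>d1\<close> is added, so \<open>|V1| - 2 \<le> |P \<inter> E1| \<le> |V1| - 1\<close>; since
  \<open>|Ei| = 2|Vi| - 2\<close> and \<open>|V| = |V1| + |V2| - 2\<close>, edge counting forces each tree of a pair to be
  a spanning tree on one side and a spanning tree minus the virtual edge on the other. Two
  spanning trees of equal size that agree off a single edge coincide, which gives injectivity.\<close>

lemma adj_sym: "adj T ends x y \<Longrightarrow> adj T ends y x"
  unfolding adj_def by (auto simp: insert_commute)

lemma adj_rtranclp_sym: "(adj T ends)\<^sup>*\<^sup>* x y \<Longrightarrow> (adj T ends)\<^sup>*\<^sup>* y x"
  by (induction rule: rtranclp_induct) (auto intro: converse_rtranclp_into_rtranclp adj_sym)

lemma rtranclp_map:
  assumes "r\<^sup>*\<^sup>* x y" "\<And>u v. r u v \<Longrightarrow> s\<^sup>*\<^sup>* (g u) (g v)"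
  shows "s\<^sup>*\<^sup>* (g x) (g y)"
  using assms(1)
proof (induction rule: rtranclp_induct)
  case (step y z)
  then show ?case using assms(2)[of y z] by (meson rtranclp_trans)
qed simp

lemma adj_rtranclp_mono: "(adj P ends)\<^sup>*\<^sup>* x y \<Longrightarrow> P \<subseteq> R \<Longrightarrow> (adj R ends)\<^sup>*\<^sup>* x y"
  using rtranclp_mono[of "adj P ends" "adj R ends"] unfolding adj_def by blast

lemma adj_rtranclp_image:
  assumes "\<forall>e\<in>P. ends e = f ` ends' e" "(adj P ends')\<^sup>*\<^sup>* p q"
  shows "(adj P ends)\<^sup>*\<^sup>* (f p) (f q)"
proof (rule rtranclp_map[OF assms(2)])
  fix u v assume "adj P ends' u v"
  then have "adj P ends (f u) (f v)" using assms(1) unfolding adj_def by auto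
  then show "(adj P ends)\<^sup>*\<^sup>* (f u) (f v)" by blast
qed

lemma connected_onI_root:
  assumes "x \<in> V" "\<And>v. v \<in> V \<Longrightarrow> (adj T ends)\<^sup>*\<^sup>* x v"
  shows "connected_on V T ends"
  unfolding connected_on_def using assms by (meson adj_rtranclp_sym empty_iff rtranclp_trans)

lemma multigraph_mono: "multigraph V E ends \<Longrightarrow> T \<subseteq> E \<Longrightarrow> multigraph V T ends"
  unfolding multigraph_def by (auto intro: finite_subset)

lemma multigraph_induced:
  "multigraph V T ends \<Longrightarrow> C \<subseteq> V \<Longrightarrow> multigraph C {f\<in>T. ends f \<subseteq> C} ends"
  unfolding multigraph_def by (auto intro: finite_subset)

lemma multigraph_edge_ends:
  assumes "multigraph V T ends" "e \<in> T"
  obtains x y where "ends e = {x, y}" "x \<noteq> y" "x \<in> V" "y \<in> V"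
  using assms unfolding multigraph_def by (metis card_2_iff insert_subset)

lemma is_cycle_mono: "is_cycle F ends es vs \<Longrightarrow> F \<subseteq> F' \<Longrightarrow> is_cycle F' ends es vs"
  unfolding is_cycle_def by blast

lemma acyclic_on_mono: "acyclic_on T ends \<Longrightarrow> F \<subseteq> T \<Longrightarrow> acyclic_on F ends"
  unfolding acyclic_on_def using is_cycle_mono by blast

subsection \<open>Paths and cycles\<close>

definition is_path :: "'e set \<Rightarrow> ('e \<Rightarrow> 'v set) \<Rightarrow> 'e list \<Rightarrow> 'v list \<Rightarrow> bool" where
  "is_path T ends es vs \<longleftrightarrow> length vs = Suc (length es) \<and> set es \<subseteq> T \<and>
     (\<forall>i<length es. ends (es ! i) = {vs ! i, vs ! Suc i})"

lemma rtranclp_adj_imp_path: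
  assumes "(adj T ends)\<^sup>*\<^sup>* x y"
  shows "\<exists>es vs. is_path T ends es vs \<and> distinct vs \<and> hd vs = x \<and> last vs = y"
  using assms
proof (induction rule: rtranclp_induct)
  case base
  show ?case by (rule exI[of _ "[]"], rule exI[of _ "[x]"]) (simp add: is_path_def)
next
  case (step y z)
  then obtain es vs where p: "is_path T ends es vs" "distinct vs" "hd vs = x" "last vs = y"
    by blast
  from step(2) obtain g where g: "g \<in> T" "ends g = {y, z}" unfolding adj_def by blast
  have len: "length vs = Suc (length es)" and es: "set es \<subseteq> T"
    and edges: "\<forall>i<length es. ends (es ! i) = {vs ! i, vs ! Suc i}"
    using p(1) by (auto simp: is_path_def)
  show ?case
  proof (cases "z \<in> set vs")
    case True
    then obtain j where j: "j < length vs" "vs ! j = z" by (auto simp: in_set_conv_nth)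
    have "is_path T ends (take j es) (take (Suc j) vs)"
      unfolding is_path_def using j len es edges set_take_subset[of j es] by auto
    moreover have "last (take (Suc j) vs) = z"
      using j by (simp add: take_Suc_conv_app_nth)
    moreover have "distinct (take (Suc j) vs)" "hd (take (Suc j) vs) = x" using p(2,3) by simp_all
    ultimately show ?thesis by blast
  next
    case False
    have "vs ! length es = y" using p(4) len by (metis diff_Suc_1 last_conv_nth list.size(3) nat.simps(3))
    then have "is_path T ends (es @ [g]) (vs @ [z])"
      unfolding is_path_def using len es edges g by (auto simp: nth_append less_Suc_eq)
    moreover have "hd (vs @ [z]) = x" using p(3) len by (cases vs) auto
    ultimately show ?thesis using p(2) False by (intro exI[of _ "es @ [g]"] exI[of _ "vs @ [z]"]) simp
  qed
qed

lemma path_distinct_edges: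
  assumes "is_path T ends es vs" "distinct vs"
  shows "distinct es"
proof -
  have len: "length vs = Suc (length es)"
    and edges: "\<forall>k<length es. ends (es ! k) = {vs ! k, vs ! Suc k}"
    using assms(1) by (auto simp: is_path_def)
  have "es ! i \<noteq> es ! j" if ij: "i < j" "j < length es" for i j
  proof
    assume "es ! i = es ! j"
    then have "{vs ! i, vs ! Suc i} = {vs ! j, vs ! Suc j}" using edges ij by (metis less_trans)
    then have "vs ! i = vs ! j \<or> vs ! i = vs ! Suc j" by blast
    then show False using ij len assms(2) nth_eq_iff_index_eq by fastforce
  qed
  then show ?thesis unfolding distinct_conv_nth by (metis linorder_neqE_nat)
qed

lemma acyclic_on_edge_separates:
  assumes "acyclic_on T ends" "e \<in> T" "ends e = {x, y}"
  shows "\<not> (adj (T - {e}) ends)\<^sup>*\<^sup>* x y"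
proof
  assume "(adj (T - {e}) ends)\<^sup>*\<^sup>* x y"
  from rtranclp_adj_imp_path[OF this] obtain es vs
    where p: "is_path (T - {e}) ends es vs" "distinct vs" "hd vs = x" "last vs = y"
    by blast
  have len: "length vs = Suc (length es)" and es: "set es \<subseteq> T - {e}"
    and edges: "\<forall>i<length es. ends (es ! i) = {vs ! i, vs ! Suc i}"
    using p(1) by (auto simp: is_path_def)
  have "vs \<noteq> []" using len by auto
  then have ends_vs: "vs ! 0 = x" "vs ! length es = y"
    using p(3,4) len by (simp_all add: hd_conv_nth last_conv_nth)
  have "is_cycle T ends (es @ [e]) vs"
    unfolding is_cycle_def
  proof (intro conjI allI impI)
    show "length (es @ [e]) = length vs" "1 \<le> length (es @ [e])" using len by simp_all
    show "distinct (es @ [e])" using path_distinct_edges[OF p(1,2)] es by auto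
    show "distinct vs" by (fact p(2))
    show "set (es @ [e]) \<subseteq> T" using es assms(2) by auto
    fix i assume i: "i < length (es @ [e])"
    show "ends ((es @ [e]) ! i) = {vs ! i, vs ! ((i + 1) mod length vs)}"
    proof (cases "i < length es")
      case True
      then show ?thesis using edges len by (simp add: nth_append)
    next
      case False
      then have "i = length es" using i by simp
      moreover have "(i + 1) mod length vs = 0" using \<open>i = length es\<close> len by simp
      ultimately show ?thesis using assms(3) ends_vs by (simp add: nth_append insert_commute)
    qed
  qed
  then show False using assms(1) unfolding acyclic_on_def by blast
qed

lemma connected_on_Diff_cycle_edge:
  assumes cyc: "is_cycle T ends es vs" and con: "connected_on V T ends"
  shows "connected_on V (T - {es ! 0}) ends"
proof -
  define k where "k = length es"
  have lk: "length vs = k" "k \<ge> 1" "distinct es" "set es \<subseteq> T"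
    and edges: "\<And>i. i < k \<Longrightarrow> ends (es ! i) = {vs ! i, vs ! ((i + 1) mod k)}"
    using cyc unfolding is_cycle_def k_def by auto
  let ?r = "adj (T - {es ! 0}) ends"
  have around: "j \<le> k \<Longrightarrow> ?r\<^sup>*\<^sup>* (vs ! (1 mod k)) (vs ! (j mod k))" if "1 \<le> j" for j
    using that
  proof (induction j rule: dec_induct)
    case base
    then show ?case by simp
  next
    case (step j)
    then have j: "1 \<le> j" "j < k" by simp_all
    have "es ! j \<noteq> es ! 0" using lk(3) j nth_eq_iff_index_eq[of es j 0] unfolding k_def by fastforce
    moreover have "es ! j \<in> T" using lk(4) j nth_mem unfolding k_def by blast
    ultimately have "?r (vs ! (j mod k)) (vs ! (Suc j mod k))"
      using edges[of j] j unfolding adj_def by auto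
    with step show ?case by (simp add: rtranclp.rtrancl_into_rtrancl)
  qed
  have ends0: "ends (es ! 0) = {vs ! 0, vs ! (1 mod k)}" using edges[of 0] lk by simp
  have back_edge: "?r\<^sup>*\<^sup>* (vs ! (1 mod k)) (vs ! 0)" using around[of k] lk by simp
  have step_r: "?r\<^sup>*\<^sup>* u v" if uv: "adj T ends u v" for u v
  proof -
    obtain g where g: "g \<in> T" "ends g = {u, v}" using uv unfolding adj_def by blast
    show ?thesis
    proof (cases "g = es ! 0")
      case True
      then have "{u, v} = {vs ! 0, vs ! (1 mod k)}" using g ends0 by simp
      then show ?thesis using back_edge adj_rtranclp_sym[OF back_edge] by (auto simp: doubleton_eq_iff)
    next
      case False
      then show ?thesis using g unfolding adj_def by blast
    qed
  qed
  have "?r\<^sup>*\<^sup>* u v" if "(adj T ends)\<^sup>*\<^sup>* u v" for u v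
    using that
  proof (induction rule: rtranclp_induct)
    case (step y z)
    then show ?case using step_r[of y z] by (meson rtranclp_trans)
  qed simp
  then show ?thesis using con unfolding connected_on_def by blast
qed

lemma is_cycle_vertices:
  assumes "is_cycle F ends es vs" "\<forall>e\<in>F. ends e \<subseteq> W"
  shows "set vs \<subseteq> W"
proof
  fix v assume "v \<in> set vs"
  then obtain i where i: "i < length vs" "vs ! i = v" by (auto simp: in_set_conv_nth)
  have "es ! i \<in> F" "v \<in> ends (es ! i)" using assms(1) i unfolding is_cycle_def by auto
  then show "v \<in> W" using assms(2) by blast
qed

lemma is_cycle_image:
  assumes cyc: "is_cycle F ends' es vs" and inj: "inj_on f (set vs)"
    and ends: "\<forall>e\<in>F. ends e = f ` ends' e"
  shows "is_cycle F ends es (map f vs)"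
  unfolding is_cycle_def
proof (intro conjI allI impI)
  show "distinct (map f vs)" using cyc inj unfolding is_cycle_def by (simp add: distinct_map)
  fix i assume i: "i < length es"
  then have "es ! i \<in> F" using cyc nth_mem unfolding is_cycle_def by blast
  then have "ends (es ! i) = f ` ends' (es ! i)" using ends by blast
  also have "\<dots> = {f (vs ! i), f (vs ! ((i + 1) mod length vs))}"
    using cyc i unfolding is_cycle_def by auto
  also have "\<dots> = {map f vs ! i, map f vs ! ((i + 1) mod length (map f vs))}"
  proof -
    have "length vs > 0" "i < length vs" using cyc i unfolding is_cycle_def by auto
    then show ?thesis by simp
  qed
  finally show "ends (es ! i) = {map f vs ! i, map f vs ! ((i + 1) mod length (map f vs))}" .
qed (use cyc in \<open>auto simp: is_cycle_def\<close>)

subsection \<open>Components and edge counts\<close>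

definition component :: "'v set \<Rightarrow> 'e set \<Rightarrow> ('e \<Rightarrow> 'v set) \<Rightarrow> 'v \<Rightarrow> 'v set" where
  "component V T ends x = {v \<in> V. (adj T ends)\<^sup>*\<^sup>* x v}"

lemma component_subset: "component V T ends x \<subseteq> V"
  unfolding component_def by blast

lemma edge_in_component_or_outside:
  assumes "multigraph V T ends" "f \<in> T"
  shows "ends f \<subseteq> component V T ends x \<or> ends f \<subseteq> V - component V T ends x"
proof -
  obtain p q where pq: "ends f = {p, q}" "p \<in> V" "q \<in> V"
    using multigraph_edge_ends[OF assms] by metis
  then have "adj T ends p q" "adj T ends q p"
    using assms(2) unfolding adj_def by (auto simp: insert_commute)
  then have "(adj T ends)\<^sup>*\<^sup>* x p \<longleftrightarrow> (adj T ends)\<^sup>*\<^sup>* x q"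
    by (meson rtranclp.rtrancl_into_rtrancl)
  then show ?thesis using pq unfolding component_def by auto
qed

lemma component_card_split:
  fixes x :: 'v
  assumes mg: "multigraph V T ends"
  defines "C \<equiv> component V T ends x"
  shows "card V = card C + card (V - C)"
    and "card T = card {f \<in> T. ends f \<subseteq> C} + card {f \<in> T. ends f \<subseteq> V - C}"
proof -
  have fin: "finite V" "finite T" and two: "\<And>f. f \<in> T \<Longrightarrow> card (ends f) = 2"
    using mg unfolding multigraph_def by auto
  have CV: "C \<subseteq> V" unfolding C_def by (rule component_subset)
  show "card V = card C + card (V - C)"
    using card_Diff_subset[OF finite_subset[OF CV fin(1)] CV] card_mono[OF fin(1) CV] by simp
  have "T = {f \<in> T. ends f \<subseteq> C} \<union> {f \<in> T. ends f \<subseteq> V - C}"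
    using edge_in_component_or_outside[OF mg] unfolding C_def by blast
  moreover have "{f \<in> T. ends f \<subseteq> C} \<inter> {f \<in> T. ends f \<subseteq> V - C} = {}"
  proof -
    have "ends f \<noteq> {}" if "f \<in> T" for f using two[OF that] by auto
    then show ?thesis by blast
  qed
  ultimately show "card T = card {f \<in> T. ends f \<subseteq> C} + card {f \<in> T. ends f \<subseteq> V - C}"
    using fin(2) by (metis (no_types, lifting) card_Un_disjoint finite_Un)
qed

lemma connected_on_component:
  assumes mg: "multigraph V T ends" and x: "x \<in> V"
  shows "connected_on (component V T ends x) {f \<in> T. ends f \<subseteq> component V T ends x} ends"
proof (rule connected_onI_root)
  let ?C = "component V T ends x"
  show "x \<in> ?C" using x unfolding component_def by simp
  have "(adj {f \<in> T. ends f \<subseteq> ?C} ends)\<^sup>*\<^sup>* x v" if "(adj T ends)\<^sup>*\<^sup>* x v" for v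
    using that
  proof (induction rule: rtranclp_induct)
    case (step y z)
    then obtain g where g: "g \<in> T" "ends g = {y, z}" unfolding adj_def by blast
    have "ends g \<subseteq> V" using mg g(1) unfolding multigraph_def by blast
    then have "ends g \<subseteq> ?C" using g(2) step(1,2) unfolding component_def by auto
    then have "adj {f \<in> T. ends f \<subseteq> ?C} ends y z" using g unfolding adj_def by blast
    then show ?case using step(3) by simp
  qed simp
  then show "(adj {f \<in> T. ends f \<subseteq> ?C} ends)\<^sup>*\<^sup>* x v" if "v \<in> ?C" for v
    using that unfolding component_def by blast
qed

lemma component_eq_imp_connected_on:
  "component V T ends x = V \<Longrightarrow> x \<in> V \<Longrightarrow> connected_on V T ends"
  by (rule connected_onI_root[of x]) (auto simp: component_def)

lemma rtranclp_adj_Diff_edge: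
  assumes "(adj T ends)\<^sup>*\<^sup>* x v" "ends e = {x, y}"
  shows "(adj (T - {e}) ends)\<^sup>*\<^sup>* x v \<or> (adj (T - {e}) ends)\<^sup>*\<^sup>* y v"
  using assms(1)
proof (induction rule: rtranclp_induct)
  case (step v w)
  then obtain g where g: "g \<in> T" "ends g = {v, w}" unfolding adj_def by blast
  show ?case
  proof (cases "g = e")
    case True
    then have "w = x \<or> w = y" using g assms(2) by (metis doubleton_eq_iff)
    then show ?thesis by auto
  next
    case False
    then have "adj (T - {e}) ends v w" using g unfolding adj_def by blast
    then show ?thesis using step(3) by (meson rtranclp.rtrancl_into_rtrancl)
  qed
qed simp

lemma component_Diff_edge_complement:
  assumes con: "connected_on V T ends" and e: "ends e = {x, y}" "x \<in> V"
    and not_con: "\<not> connected_on V (T - {e}) ends"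
  shows "V - component V (T - {e}) ends x = component V (T - {e}) ends y"
proof -
  let ?r = "adj (T - {e}) ends"
  have reach: "?r\<^sup>*\<^sup>* x v \<or> ?r\<^sup>*\<^sup>* y v" if "v \<in> V" for v
    using rtranclp_adj_Diff_edge[of T ends x v e y] e con that unfolding connected_on_def by blast
  have sep: "\<not> ?r\<^sup>*\<^sup>* x y"
  proof
    assume "?r\<^sup>*\<^sup>* x y"
    then have "connected_on V (T - {e}) ends"
      using reach e(2) by (meson connected_onI_root rtranclp_trans)
    then show False using not_con by contradiction
  qed
  show ?thesis
  proof (intro equalityI subsetI)
    fix v assume "v \<in> V - component V (T - {e}) ends x"
    then show "v \<in> component V (T - {e}) ends y" using reach unfolding component_def by auto
  next
    fix v assume "v \<in> component V (T - {e}) ends y"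
    then have "?r\<^sup>*\<^sup>* y v" "v \<in> V" by (auto simp: component_def)
    moreover from this(1) have "\<not> ?r\<^sup>*\<^sup>* x v"
      using sep by (meson adj_rtranclp_sym rtranclp_trans)
    ultimately show "v \<in> V - component V (T - {e}) ends x" unfolding component_def by auto
  qed
qed

text \<open>Both counting bounds are proved by deleting an edge and recursing into the components.\<close>
lemma acyclic_on_card_le:
  assumes "multigraph V T ends" "acyclic_on T ends" "V \<noteq> {}"
  shows "card T + 1 \<le> card V"
  using assms
proof (induction "card T" arbitrary: V T rule: less_induct)
  case less
  show ?case
  proof (cases "T = {}")
    case True
    then show ?thesis using less(2,4) by (simp add: multigraph_def Suc_le_eq card_gt_0_iff)
  next
    case False
    then obtain e where e: "e \<in> T" by blast
    obtain x y where xy: "ends e = {x, y}" "x \<in> V" "y \<in> V"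
      using multigraph_edge_ends[OF less(2) e] by metis
    define T' where "T' = T - {e}"
    define C where "C = component V T' ends x"
    have mg: "multigraph V T' ends" unfolding T'_def by (rule multigraph_mono[OF less(2)]) blast
    have "finite T" using less(2) by (simp add: multigraph_def)
    then have card_T: "card T = card T' + 1" unfolding T'_def using card_Suc_Diff1[OF _ e] by simp
    have bound: "card {f \<in> T'. ends f \<subseteq> W} + 1 \<le> card W" if "W \<subseteq> V" "W \<noteq> {}" for W
    proof (rule less(1))
      have "finite T'" using mg by (simp add: multigraph_def)
      then have "card {f \<in> T'. ends f \<subseteq> W} \<le> card T'" by (rule card_mono) blast
      then show "card {f \<in> T'. ends f \<subseteq> W} < card T" using card_T by linarith
      show "multigraph W {f \<in> T'. ends f \<subseteq> W} ends" by (rule multigraph_induced[OF mg that(1)])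
      show "acyclic_on {f \<in> T'. ends f \<subseteq> W} ends"
        by (rule acyclic_on_mono[OF less(3)]) (auto simp: T'_def)
    qed (fact that(2))
    have "x \<in> C" "y \<notin> C"
      using xy acyclic_on_edge_separates[OF less(3) e xy(1)] unfolding C_def T'_def component_def by auto
    then have C: "C \<subseteq> V" "C \<noteq> {}" "V - C \<noteq> {}"
      using xy(3) component_subset[of V T' ends x] unfolding C_def by auto
    show ?thesis
      using component_card_split[OF mg, of x, folded C_def] bound[OF C(1,2)] bound[OF _ C(3)] card_T
      by fastforce
  qed
qed

lemma connected_on_card_ge:
  assumes "multigraph V T ends" "connected_on V T ends"
  shows "card V \<le> card T + 1"
  using assms
proof (induction "card T" arbitrary: V T rule: less_induct)
  case less
  show ?case
  proof (cases "T = {}")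
    case True
    have "u = v" if "(adj T ends)\<^sup>*\<^sup>* u v" for u v
      using that True by (induction rule: rtranclp_induct) (auto simp: adj_def)
    then have "\<forall>u\<in>V. \<forall>v\<in>V. u = v" using less(3) unfolding connected_on_def by blast
    then show ?thesis using less(2) card_le_Suc0_iff_eq[of V] by (simp add: multigraph_def)
  next
    case False
    then obtain e where e: "e \<in> T" by blast
    obtain x y where xy: "ends e = {x, y}" "x \<in> V" "y \<in> V"
      using multigraph_edge_ends[OF less(2) e] by metis
    define T' where "T' = T - {e}"
    have mg: "multigraph V T' ends" unfolding T'_def by (rule multigraph_mono[OF less(2)]) blast
    have "finite T" using less(2) by (simp add: multigraph_def)
    then have card_T: "card T = card T' + 1" unfolding T'_def using card_Suc_Diff1[OF _ e] by simp
    have bound: "card W \<le> card {f \<in> T'. ends f \<subseteq> W} + 1"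
      if "W \<subseteq> V" "connected_on W {f \<in> T'. ends f \<subseteq> W} ends" for W
    proof (rule less(1))
      have "finite T'" using mg by (simp add: multigraph_def)
      then have "card {f \<in> T'. ends f \<subseteq> W} \<le> card T'" by (rule card_mono) blast
      then show "card {f \<in> T'. ends f \<subseteq> W} < card T" using card_T by linarith
      show "multigraph W {f \<in> T'. ends f \<subseteq> W} ends" by (rule multigraph_induced[OF mg that(1)])
    qed (fact that(2))
    show ?thesis
    proof (cases "connected_on V T' ends")
      case True
      then show ?thesis using less(1)[OF _ mg True] card_T by linarith
    next
      case False
      define C where "C = component V T' ends x"
      have "V - C = component V T' ends y"
        using component_Diff_edge_complement[OF less(3) xy(1,2) False[unfolded T'_def]]
        unfolding C_def T'_def .
      then show ?thesis
        using component_card_split[OF mg, of x, folded C_def] card_T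
          bound[OF _ connected_on_component[OF mg xy(2), folded C_def]]
          bound[OF _ connected_on_component[OF mg xy(3)]]
        by (simp add: C_def component_subset)
    qed
  qed
qed

lemma connected_on_card_imp_acyclic_on:
  assumes mg: "multigraph V T ends" and con: "connected_on V T ends" and card_T: "card T + 1 = card V"
  shows "acyclic_on T ends"
  unfolding acyclic_on_def
proof
  assume "\<exists>es vs. is_cycle T ends es vs"
  then obtain es vs where cyc: "is_cycle T ends es vs" by blast
  then have "es \<noteq> []" "set es \<subseteq> T" unfolding is_cycle_def by auto
  then have e: "es ! 0 \<in> T" using nth_mem[of 0 es] by auto
  have "finite T" using mg by (simp add: multigraph_def)
  then have "Suc (card (T - {es ! 0})) = card T" by (rule card_Suc_Diff1[OF _ e])
  moreover have "card V \<le> card (T - {es ! 0}) + 1"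
    by (rule connected_on_card_ge[OF multigraph_mono[OF mg] connected_on_Diff_cycle_edge[OF cyc con]])
      blast
  ultimately show False using card_T by linarith
qed

lemma acyclic_on_card_imp_connected_on:
  assumes mg: "multigraph V T ends" and acyc: "acyclic_on T ends" and card_T: "card T + 1 = card V"
  shows "connected_on V T ends"
proof -
  have "V \<noteq> {}" using card_T by (cases "V = {}") simp_all
  then obtain x where x: "x \<in> V" by blast
  define C where "C = component V T ends x"
  have bound: "card {f \<in> T. ends f \<subseteq> W} + 1 \<le> card W" if "W \<subseteq> V" "W \<noteq> {}" for W
    by (rule acyclic_on_card_le[OF multigraph_induced[OF mg that(1)] acyclic_on_mono[OF acyc] that(2)])
      blast
  have C: "C \<subseteq> V" "C \<noteq> {}" using x unfolding C_def component_def by auto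
  have "V - C = {}"
  proof (rule ccontr)
    assume "V - C \<noteq> {}"
    then show False
      using component_card_split[OF mg, of x, folded C_def] bound[OF C]
        bound[OF Diff_subset \<open>V - C \<noteq> {}\<close>] card_T
      by linarith
  qed
  then have "component V T ends x = V" using C(1) unfolding C_def by blast
  then show ?thesis by (rule component_eq_imp_connected_on[OF _ x])
qed

subsection \<open>Spanning trees\<close>

lemma spanning_tree_card:
  assumes "multigraph V E ends" "spanning_tree V E ends T"
  shows "card T + 1 = card V"
proof -
  have mg: "multigraph V T ends" using assms multigraph_mono unfolding spanning_tree_def by blast
  have T: "connected_on V T ends" "acyclic_on T ends" "V \<noteq> {}"
    using assms(2) unfolding spanning_tree_def connected_on_def by auto
  show ?thesis using connected_on_card_ge[OF mg T(1)] acyclic_on_card_le[OF mg T(2,3)] by linarith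
qed

lemma spanning_treeI_connected:
  assumes "multigraph V E ends" "T \<subseteq> E" "connected_on V T ends" "card T + 1 = card V"
  shows "spanning_tree V E ends T"
  using assms connected_on_card_imp_acyclic_on[OF multigraph_mono[OF assms(1,2)]]
  unfolding spanning_tree_def by blast

lemma spanning_treeI_acyclic:
  assumes "multigraph V E ends" "T \<subseteq> E" "acyclic_on T ends" "card T + 1 = card V"
  shows "spanning_tree V E ends T"
  using assms acyclic_on_card_imp_connected_on[OF multigraph_mono[OF assms(1,2)]]
  unfolding spanning_tree_def by blast

lemma spanning_tree_eq_if_Diff_eq:
  assumes mg: "multigraph V E ends"
    and A: "spanning_tree V E ends A" and B: "spanning_tree V E ends B" and AB: "A - {d} = B - {d}"
  shows "A = B"
proof (rule ccontr)
  assume "A \<noteq> B"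
  then have "A = insert d B \<and> d \<notin> B \<or> B = insert d A \<and> d \<notin> A" using AB by blast
  moreover have "finite A" "finite B"
    using A B mg finite_subset unfolding spanning_tree_def multigraph_def by auto
  moreover have "card A = card B"
    using spanning_tree_card[OF mg A] spanning_tree_card[OF mg B] by simp
  ultimately show False by auto
qed

lemma tree_pairs_swap: "(S, T) \<in> tree_pairs V E ends \<Longrightarrow> (T, S) \<in> tree_pairs V E ends"
  unfolding tree_pairs_def by blast

lemma bispanning_card_edges:
  assumes "bispanning V E ends"
  shows "card E + 2 = 2 * card V"
proof -
  have mg: "multigraph V E ends" using assms by (simp add: bispanning_def)
  obtain S T where S: "spanning_tree V E ends S" and T: "spanning_tree V E ends T"
    and "S \<inter> T = {}" "S \<union> T = E"
    using assms unfolding bispanning_def tree_pairs_def by auto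
  moreover have "finite E" using mg by (simp add: multigraph_def)
  ultimately have "card E = card S + card T" using card_Un_disjoint[of S T] by auto
  then show ?thesis using spanning_tree_card[OF mg S] spanning_tree_card[OF mg T] by linarith
qed


subsection \<open>2-clique sums\<close>

lemma two_clique_sum_edges:
  assumes "two_clique_sum V E ends V1 E1 ends1 d1 V2 E2 ends2 d2"
  shows "d1 \<in> E1" "d2 \<in> E2" "E1 \<inter> E2 = {}" "E = (E1 - {d1}) \<union> (E2 - {d2})"
  using assms unfolding two_clique_sum_def by auto

lemma two_clique_sumE:
  assumes "two_clique_sum V E ends V1 E1 ends1 d1 V2 E2 ends2 d2"
  obtains f1 f2 where "inj_on f1 V1" "inj_on f2 V2" "V = f1 ` V1 \<union> f2 ` V2"
    "f1 ` V1 \<inter> f2 ` V2 = f1 ` ends1 d1" "f2 ` ends2 d2 = f1 ` ends1 d1"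
    "\<forall>e\<in>E1 - {d1}. ends e = f1 ` ends1 e" "\<forall>e\<in>E2 - {d2}. ends e = f2 ` ends2 e"
  using assms unfolding two_clique_sum_def by (elim conjE exE) (rule that; assumption)

lemma two_clique_sum_sym:
  assumes "two_clique_sum V E ends V1 E1 ends1 d1 V2 E2 ends2 d2"
  shows "two_clique_sum V E ends V2 E2 ends2 d2 V1 E1 ends1 d1"
proof -
  obtain f1 f2 where f: "inj_on f1 V1" "inj_on f2 V2" "V = f1 ` V1 \<union> f2 ` V2"
    "f1 ` V1 \<inter> f2 ` V2 = f1 ` ends1 d1" "f2 ` ends2 d2 = f1 ` ends1 d1"
    "\<forall>e\<in>E1 - {d1}. ends e = f1 ` ends1 e" "\<forall>e\<in>E2 - {d2}. ends e = f2 ` ends2 e"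
    by (rule two_clique_sumE[OF assms])
  note E = two_clique_sum_edges[OF assms]
  show ?thesis
    unfolding two_clique_sum_def
  proof (intro conjI exI[of _ f2] exI[of _ f1])
    show "E2 \<inter> E1 = {}" "E = (E2 - {d2}) \<union> (E1 - {d1})" using E(3,4) by auto
    show "V = f2 ` V2 \<union> f1 ` V1" "f2 ` V2 \<inter> f1 ` V1 = f2 ` ends2 d2" using f(3-5) by auto
  qed (use f E in auto)
qed

lemma two_clique_sum_card_vertices:
  assumes sum: "two_clique_sum V E ends V1 E1 ends1 d1 V2 E2 ends2 d2"
    and mg1: "multigraph V1 E1 ends1" and mg2: "multigraph V2 E2 ends2"
  shows "card V + 2 = card V1 + card V2"
proof -
  obtain f1 f2 where f: "inj_on f1 V1" "inj_on f2 V2" "V = f1 ` V1 \<union> f2 ` V2"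
    "f1 ` V1 \<inter> f2 ` V2 = f1 ` ends1 d1"
    by (rule two_clique_sumE[OF sum])
  have fin: "finite V1" "finite V2" using mg1 mg2 unfolding multigraph_def by auto
  have "ends1 d1 \<subseteq> V1" "card (ends1 d1) = 2"
    using mg1 two_clique_sum_edges(1)[OF sum] unfolding multigraph_def by auto
  then have "card (f1 ` ends1 d1) = 2" using card_image[OF inj_on_subset[OF f(1)]] by simp
  then show ?thesis
    using card_Un_Int[of "f1 ` V1" "f2 ` V2"] fin card_image[OF f(1)] card_image[OF f(2)] f(3,4)
    by simp
qed

lemma connected_on_glue:
  assumes sum: "two_clique_sum V E ends V1 E1 ends1 d1 V2 E2 ends2 d2"
    and mg: "multigraph V1 E1 ends1" "multigraph V2 E2 ends2"
    and P: "P \<subseteq> E1 - {d1}" "connected_on V1 P ends1"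
    and Q: "Q \<subseteq> E2" "connected_on V2 Q ends2" "d2 \<in> Q"
  shows "connected_on V (P \<union> (Q - {d2})) ends"
proof -
  obtain f1 f2 where f: "inj_on f1 V1" "inj_on f2 V2" "V = f1 ` V1 \<union> f2 ` V2"
    "f1 ` V1 \<inter> f2 ` V2 = f1 ` ends1 d1" "f2 ` ends2 d2 = f1 ` ends1 d1"
    "\<forall>e\<in>E1 - {d1}. ends e = f1 ` ends1 e" "\<forall>e\<in>E2 - {d2}. ends e = f2 ` ends2 e"
    by (rule two_clique_sumE[OF sum])
  note E = two_clique_sum_edges[OF sum]
  define R where "R = P \<union> (Q - {d2})"
  have side1: "(adj R ends)\<^sup>*\<^sup>* (f1 p) (f1 q)" if "p \<in> V1" "q \<in> V1" for p q
  proof -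
    have "(adj P ends1)\<^sup>*\<^sup>* p q" using P(2) that unfolding connected_on_def by blast
    moreover have "\<forall>e\<in>P. ends e = f1 ` ends1 e" using f(6) P(1) by blast
    ultimately have "(adj P ends)\<^sup>*\<^sup>* (f1 p) (f1 q)" using adj_rtranclp_image by metis
    then show ?thesis by (rule adj_rtranclp_mono) (simp add: R_def)
  qed
  have ends_d1: "ends1 d1 \<subseteq> V1" using mg(1) E(1) unfolding multigraph_def by blast
  \<comment> \<open>a step along d2 is replaced by a walk in the first summand between the ends of d1\<close>
  have side2: "(adj R ends)\<^sup>*\<^sup>* (f2 p) (f2 q)" if "(adj Q ends2)\<^sup>*\<^sup>* p q" for p q
  proof (rule rtranclp_map[OF that])
    fix u v assume "adj Q ends2 u v"
    then obtain h where h: "h \<in> Q" "ends2 h = {u, v}" unfolding adj_def by blast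
    show "(adj R ends)\<^sup>*\<^sup>* (f2 u) (f2 v)"
    proof (cases "h = d2")
      case True
      then have "f2 u \<in> f1 ` ends1 d1" "f2 v \<in> f1 ` ends1 d1" using h(2) f(5) by auto
      then obtain p q where "p \<in> V1" "q \<in> V1" "f2 u = f1 p" "f2 v = f1 q" using ends_d1 by blast
      then show ?thesis using side1 by simp
    next
      case False
      then have "ends h = {f2 u, f2 v}" "h \<in> R" using h f(7) Q(1) unfolding R_def by auto
      then show ?thesis unfolding adj_def by blast
    qed
  qed
  obtain a b where ab: "ends1 d1 = {a, b}" "a \<in> V1"
    using multigraph_edge_ends[OF mg(1) E(1)] by metis
  have "f1 a \<in> f2 ` ends2 d2" using f(5) ab(1) by simp
  then obtain a2 where a2: "f1 a = f2 a2" "a2 \<in> ends2 d2" by (rule imageE)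
  have "a2 \<in> V2" using a2(2) mg(2) E(2) unfolding multigraph_def by blast
  have reach: "(adj R ends)\<^sup>*\<^sup>* (f1 a) w" if "w \<in> V" for w
  proof -
    from that f(3) consider p where "p \<in> V1" "w = f1 p" | p where "p \<in> V2" "w = f2 p" by blast
    then show ?thesis
    proof cases
      case 1
      then show ?thesis using side1 ab(2) by simp
    next
      case 2
      then have "(adj Q ends2)\<^sup>*\<^sup>* a2 p" using Q(2) \<open>a2 \<in> V2\<close> unfolding connected_on_def by blast
      then show ?thesis using side2 a2(1) 2(2) by simp
    qed
  qed
  have "f1 a \<in> V" using ab(2) f(3) by simp
  then show ?thesis using reach unfolding R_def by (rule connected_onI_root)
qed

lemma spanning_tree_glue:
  assumes sum: "two_clique_sum V E ends V1 E1 ends1 d1 V2 E2 ends2 d2"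
    and mg: "multigraph V E ends" "multigraph V1 E1 ends1" "multigraph V2 E2 ends2"
    and P: "spanning_tree V1 E1 ends1 P" "d1 \<notin> P"
    and Q: "spanning_tree V2 E2 ends2 Q" "d2 \<in> Q"
  shows "spanning_tree V E ends (P \<union> (Q - {d2}))"
proof (rule spanning_treeI_connected[OF mg(1)])
  note E = two_clique_sum_edges[OF sum]
  have PQ: "P \<subseteq> E1 - {d1}" "Q \<subseteq> E2" "connected_on V1 P ends1" "connected_on V2 Q ends2"
    using P Q unfolding spanning_tree_def by auto
  show "P \<union> (Q - {d2}) \<subseteq> E" using PQ E(4) by blast
  show "connected_on V (P \<union> (Q - {d2})) ends"
    by (rule connected_on_glue[OF sum mg(2,3) PQ(1,3) PQ(2,4) Q(2)])
  have "finite E1" "finite E2" using mg(2,3) unfolding multigraph_def by auto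
  then have "finite P" "finite Q" using PQ(1,2) finite_subset by blast+
  then have "card (P \<union> (Q - {d2})) = card P + card (Q - {d2})"
    using PQ(1,2) E(3) by (intro card_Un_disjoint) auto
  moreover have "Suc (card (Q - {d2})) = card Q" by (rule card_Suc_Diff1[OF \<open>finite Q\<close> Q(2)])
  ultimately show "card (P \<union> (Q - {d2})) + 1 = card V"
    using spanning_tree_card[OF mg(2) P(1)] spanning_tree_card[OF mg(3) Q(1)]
      two_clique_sum_card_vertices[OF sum mg(2,3)]
    by linarith
qed

lemma acyclic_on_restrict:
  assumes sum: "two_clique_sum V E ends V1 E1 ends1 d1 V2 E2 ends2 d2"
    and mg1: "multigraph V1 E1 ends1" and P: "P \<subseteq> E" "acyclic_on P ends"
  shows "acyclic_on (P \<inter> E1) ends1"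
  unfolding acyclic_on_def
proof
  assume "\<exists>es vs. is_cycle (P \<inter> E1) ends1 es vs"
  then obtain es vs where cyc: "is_cycle (P \<inter> E1) ends1 es vs" by blast
  obtain f1 f2 where f: "inj_on f1 V1" "inj_on f2 V2" "V = f1 ` V1 \<union> f2 ` V2"
    "f1 ` V1 \<inter> f2 ` V2 = f1 ` ends1 d1" "f2 ` ends2 d2 = f1 ` ends1 d1"
    "\<forall>e\<in>E1 - {d1}. ends e = f1 ` ends1 e" "\<forall>e\<in>E2 - {d2}. ends e = f2 ` ends2 e"
    by (rule two_clique_sumE[OF sum])
  have "P \<inter> E1 \<subseteq> E1 - {d1}" using P(1) two_clique_sum_edges[OF sum] by blast
  moreover have "set vs \<subseteq> V1" using is_cycle_vertices[OF cyc] mg1 unfolding multigraph_def by blast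
  ultimately have "is_cycle (P \<inter> E1) ends es (map f1 vs)"
    using is_cycle_image[OF cyc inj_on_subset[OF f(1)]] f(6) by blast
  then have "is_cycle P ends es (map f1 vs)" by (rule is_cycle_mono) blast
  then show False using P(2) unfolding acyclic_on_def by blast
qed


lemma connected_on_restrict:
  assumes sum: "two_clique_sum V E ends V1 E1 ends1 d1 V2 E2 ends2 d2"
    and mg: "multigraph V1 E1 ends1" "multigraph V2 E2 ends2"
    and P: "P \<subseteq> E" "connected_on V P ends"
  shows "connected_on V1 (P \<inter> E1 \<union> {d1}) ends1"
proof -
  obtain f1 f2 where f: "inj_on f1 V1" "inj_on f2 V2" "V = f1 ` V1 \<union> f2 ` V2"
    "f1 ` V1 \<inter> f2 ` V2 = f1 ` ends1 d1" "f2 ` ends2 d2 = f1 ` ends1 d1"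
    "\<forall>e\<in>E1 - {d1}. ends e = f1 ` ends1 e" "\<forall>e\<in>E2 - {d2}. ends e = f2 ` ends2 e"
    by (rule two_clique_sumE[OF sum])
  note E = two_clique_sum_edges[OF sum]
  obtain a b where ab: "ends1 d1 = {a, b}" "a \<in> V1" "b \<in> V1"
    using multigraph_edge_ends[OF mg(1) E(1)] by metis
  define R where "R = P \<inter> E1 \<union> {d1}"
  \<comment> \<open>vertices of the second summand are sent to an end of d1, which d1 joins to the other end\<close>
  define proj where "proj v = (if v \<in> f1 ` V1 then inv_into V1 f1 v else a)" for v
  have proj_f1: "proj (f1 p) = p" if "p \<in> V1" for p
    using that f(1) unfolding proj_def by simp
  have proj_V2: "proj v \<in> {a, b}" if "v \<in> f2 ` V2" for v
  proof (cases "v \<in> f1 ` V1")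
    case True
    then have "v \<in> f1 ` {a, b}" using that f(4) ab(1) by blast
    then show ?thesis using proj_f1 ab(2,3) by auto
  next
    case False
    then show ?thesis unfolding proj_def by simp
  qed
  have "adj R ends1 a b" "adj R ends1 b a" unfolding R_def adj_def using ab(1) by auto
  then have d1_link: "(adj R ends1)\<^sup>*\<^sup>* z z'" if "z \<in> {a, b}" "z' \<in> {a, b}" for z z'
    using that by auto
  have step: "(adj R ends1)\<^sup>*\<^sup>* (proj u) (proj v)" if uv: "adj P ends u v" for u v
  proof -
    obtain h where h: "h \<in> P" "ends h = {u, v}" using uv unfolding adj_def by blast
    show ?thesis
    proof (cases "h \<in> E1")
      case True
      then have h1: "h \<in> E1 - {d1}" using h(1) P(1) E(4) E(3) by blast
      obtain p q where pq: "ends1 h = {p, q}" "p \<in> V1" "q \<in> V1"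
        using multigraph_edge_ends[OF mg(1)] h1 by (metis DiffD1)
      then have "{u, v} = {f1 p, f1 q}" using f(6) h1 h(2) by simp
      moreover have "adj R ends1 p q" "adj R ends1 q p"
        using h(1) h1 pq(1) unfolding R_def adj_def by (auto simp: insert_commute)
      ultimately show ?thesis using proj_f1 pq(2,3) by (auto simp: doubleton_eq_iff)
    next
      case False
      then have "h \<in> E2 - {d2}" using h(1) P(1) E(4) by blast
      moreover have "ends2 h \<subseteq> V2" using calculation mg(2) unfolding multigraph_def by blast
      ultimately have "{u, v} \<subseteq> f2 ` V2" using f(7) h(2) by (metis image_mono)
      then have "u \<in> f2 ` V2" "v \<in> f2 ` V2" by auto
      then show ?thesis using proj_V2 d1_link by blast
    qed
  qed
  show ?thesis
    unfolding connected_on_def R_def[symmetric]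
  proof (intro conjI ballI)
    show "V1 \<noteq> {}" using ab(2) by blast
    fix p q assume pq: "p \<in> V1" "q \<in> V1"
    then have "(adj P ends)\<^sup>*\<^sup>* (f1 p) (f1 q)" using P(2) f(3) unfolding connected_on_def by blast
    then have "(adj R ends1)\<^sup>*\<^sup>* (proj (f1 p)) (proj (f1 q))" using step by (rule rtranclp_map)
    then show "(adj R ends1)\<^sup>*\<^sup>* p q" using proj_f1 pq by simp
  qed
qed

lemma spanning_tree_restrict:
  assumes sum: "two_clique_sum V E ends V1 E1 ends1 d1 V2 E2 ends2 d2"
    and mg: "multigraph V1 E1 ends1" "multigraph V2 E2 ends2"
    and P: "spanning_tree V E ends P"
  shows "card V1 \<le> card (P \<inter> E1) + 2"
    and "card (P \<inter> E1) + 1 = card V1 \<Longrightarrow> spanning_tree V1 E1 ends1 (P \<inter> E1)"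
    and "card (P \<inter> E1) + 2 = card V1 \<Longrightarrow> spanning_tree V1 E1 ends1 (P \<inter> E1 \<union> {d1})"
proof -
  note E = two_clique_sum_edges[OF sum]
  have P': "P \<subseteq> E" "connected_on V P ends" "acyclic_on P ends"
    using P unfolding spanning_tree_def by auto
  have "d1 \<notin> P" using P'(1) E by blast
  moreover have "finite (P \<inter> E1)" using mg(1) unfolding multigraph_def by simp
  ultimately have card_d1: "card (P \<inter> E1 \<union> {d1}) = card (P \<inter> E1) + 1" by simp
  have sub: "P \<inter> E1 \<union> {d1} \<subseteq> E1" using E(1) by blast
  note con = connected_on_restrict[OF sum mg P'(1,2)]
  show "card V1 \<le> card (P \<inter> E1) + 2"
    using connected_on_card_ge[OF multigraph_mono[OF mg(1) sub] con] card_d1 by simp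
  show "card (P \<inter> E1) + 1 = card V1 \<Longrightarrow> spanning_tree V1 E1 ends1 (P \<inter> E1)"
    by (rule spanning_treeI_acyclic[OF mg(1) _ acyclic_on_restrict[OF sum mg(1) P'(1,3)]]) auto
  show "card (P \<inter> E1) + 2 = card V1 \<Longrightarrow> spanning_tree V1 E1 ends1 (P \<inter> E1 \<union> {d1})"
    using card_d1 by (intro spanning_treeI_connected[OF mg(1) sub con]) linarith
qed

subsection \<open>The bijection\<close>

definition glue_pairs ::
  "'e \<Rightarrow> 'e \<Rightarrow> ('e set \<times> 'e set) \<times> ('e set \<times> 'e set) \<Rightarrow> 'e set \<times> 'e set" where
  "glue_pairs d1 d2 = (\<lambda>((S1, T1), (S2, T2)). (S1 \<union> S2 - {d1, d2}, T1 \<union> T2 - {d1, d2}))"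

lemma glue_pairs_sym:
  "glue_pairs d2 d1 ((S2, T2), (S1, T1)) = glue_pairs d1 d2 ((S1, T1), (S2, T2))"
  unfolding glue_pairs_def by auto

lemma glue_pairs_swap:
  "prod.swap (glue_pairs d1 d2 ((S1, T1), (S2, T2))) = glue_pairs d1 d2 ((T1, S1), (T2, S2))"
  unfolding glue_pairs_def by simp

lemma V_eta_swap:
  "((S1, T1), (S2, T2)) \<in> V_eta V1 E1 ends1 d1 V2 E2 ends2 d2 \<Longrightarrow>
   ((T1, S1), (T2, S2)) \<in> V_eta V1 E1 ends1 d1 V2 E2 ends2 d2"
  unfolding V_eta_def tree_pairs_def by blast

lemma glue_pairs_in_tree_pairs_oriented:
  assumes sum: "two_clique_sum V E ends V1 E1 ends1 d1 V2 E2 ends2 d2"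
    and mg: "multigraph V E ends" "multigraph V1 E1 ends1" "multigraph V2 E2 ends2"
    and t1: "(S1, T1) \<in> tree_pairs V1 E1 ends1" and t2: "(S2, T2) \<in> tree_pairs V2 E2 ends2"
    and d: "d1 \<notin> S1" "d2 \<in> S2"
  shows "glue_pairs d1 d2 ((S1, T1), (S2, T2)) \<in> tree_pairs V E ends"
proof -
  note E = two_clique_sum_edges[OF sum]
  have t1': "spanning_tree V1 E1 ends1 S1" "spanning_tree V1 E1 ends1 T1" "S1 \<inter> T1 = {}" "S1 \<union> T1 = E1"
    using t1 unfolding tree_pairs_def by auto
  have t2': "spanning_tree V2 E2 ends2 S2" "spanning_tree V2 E2 ends2 T2" "S2 \<inter> T2 = {}" "S2 \<union> T2 = E2"
    using t2 unfolding tree_pairs_def by auto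
  have dT: "d1 \<in> T1" "d2 \<notin> T2" using d E(1) t1'(4) t2'(3) by blast+
  have "S1 \<union> S2 - {d1, d2} = S1 \<union> (S2 - {d2})" "T1 \<union> T2 - {d1, d2} = T2 \<union> (T1 - {d1})"
    using d dT E(1-3) t1'(4) t2'(4) by blast+
  moreover have "spanning_tree V E ends (S1 \<union> (S2 - {d2}))"
    by (rule spanning_tree_glue[OF sum mg t1'(1) d(1) t2'(1) d(2)])
  moreover have "spanning_tree V E ends (T2 \<union> (T1 - {d1}))"
    by (rule spanning_tree_glue[OF two_clique_sum_sym[OF sum] mg(1,3,2) t2'(2) dT(2) t1'(2) dT(1)])
  moreover have "(S1 \<union> S2 - {d1, d2}) \<inter> (T1 \<union> T2 - {d1, d2}) = {}"
    "(S1 \<union> S2 - {d1, d2}) \<union> (T1 \<union> T2 - {d1, d2}) = E"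
    using t1'(3,4) t2'(3,4) E by blast+
  ultimately show ?thesis unfolding tree_pairs_def glue_pairs_def by simp
qed

lemma glue_pairs_in_tree_pairs:
  assumes sum: "two_clique_sum V E ends V1 E1 ends1 d1 V2 E2 ends2 d2"
    and mg: "multigraph V E ends" "multigraph V1 E1 ends1" "multigraph V2 E2 ends2"
    and x: "x \<in> V_eta V1 E1 ends1 d1 V2 E2 ends2 d2"
  shows "glue_pairs d1 d2 x \<in> tree_pairs V E ends"
proof -
  obtain S1 T1 S2 T2 where x_eq: "x = ((S1, T1), (S2, T2))" by (metis prod.exhaust)
  have t: "(S1, T1) \<in> tree_pairs V1 E1 ends1" "(S2, T2) \<in> tree_pairs V2 E2 ends2"
    and no_clash: "\<not> ((d1 \<in> S1 \<and> d2 \<in> S2) \<or> (d1 \<in> T1 \<and> d2 \<in> T2))"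
    using x unfolding x_eq V_eta_def by auto
  have "d1 \<in> S1 \<union> T1" "d2 \<in> S2 \<union> T2"
    using t two_clique_sum_edges(1,2)[OF sum] unfolding tree_pairs_def by auto
  then consider "d1 \<notin> S1" "d2 \<in> S2" | "d2 \<notin> S2" "d1 \<in> S1"
    using no_clash by blast
  then show ?thesis
  proof cases
    case 1
    show ?thesis unfolding x_eq by (rule glue_pairs_in_tree_pairs_oriented[OF sum mg t 1])
  next
    case 2
    have "glue_pairs d2 d1 ((S2, T2), (S1, T1)) \<in> tree_pairs V E ends"
      by (rule glue_pairs_in_tree_pairs_oriented[OF two_clique_sum_sym[OF sum] mg(1,3,2) t(2,1) 2])
    then show ?thesis unfolding x_eq glue_pairs_sym .
  qed
qed

lemma inj_on_glue_pairs:
  assumes sum: "two_clique_sum V E ends V1 E1 ends1 d1 V2 E2 ends2 d2"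
    and mg1: "multigraph V1 E1 ends1" and mg2: "multigraph V2 E2 ends2"
  shows "inj_on (glue_pairs d1 d2) (V_eta V1 E1 ends1 d1 V2 E2 ends2 d2)"
proof (rule inj_onI)
  note E = two_clique_sum_edges[OF sum]
  fix x y
  assume "x \<in> V_eta V1 E1 ends1 d1 V2 E2 ends2 d2" "y \<in> V_eta V1 E1 ends1 d1 V2 E2 ends2 d2"
    and eq: "glue_pairs d1 d2 x = glue_pairs d1 d2 y"
  then obtain S1 T1 S2 T2 S1' T1' S2' T2'
    where xy: "x = ((S1, T1), (S2, T2))" "y = ((S1', T1'), (S2', T2'))"
      and t1: "(S1, T1) \<in> tree_pairs V1 E1 ends1" "(S1', T1') \<in> tree_pairs V1 E1 ends1"
      and t2: "(S2, T2) \<in> tree_pairs V2 E2 ends2" "(S2', T2') \<in> tree_pairs V2 E2 ends2"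
    unfolding V_eta_def by auto
  have S: "S1 \<union> S2 - {d1, d2} = S1' \<union> S2' - {d1, d2}" and T: "T1 \<union> T2 - {d1, d2} = T1' \<union> T2' - {d1, d2}"
    using eq unfolding xy glue_pairs_def by simp_all
  have part1: "(A1 \<union> A2 - {d1, d2}) \<inter> E1 = A1 - {d1}"
    and part2: "(A1 \<union> A2 - {d1, d2}) \<inter> E2 = A2 - {d2}" if "A1 \<subseteq> E1" "A2 \<subseteq> E2" for A1 A2
    using that E(1-3) by blast+
  have trees1: "spanning_tree V1 E1 ends1 S1" "spanning_tree V1 E1 ends1 T1"
    "spanning_tree V1 E1 ends1 S1'" "spanning_tree V1 E1 ends1 T1'"
    using t1 unfolding tree_pairs_def by auto
  have trees2: "spanning_tree V2 E2 ends2 S2" "spanning_tree V2 E2 ends2 T2"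
    "spanning_tree V2 E2 ends2 S2'" "spanning_tree V2 E2 ends2 T2'"
    using t2 unfolding tree_pairs_def by auto
  have sub: "S1 \<subseteq> E1" "T1 \<subseteq> E1" "S1' \<subseteq> E1" "T1' \<subseteq> E1"
    "S2 \<subseteq> E2" "T2 \<subseteq> E2" "S2' \<subseteq> E2" "T2' \<subseteq> E2"
    using trees1 trees2 unfolding spanning_tree_def by auto
  have "S1 - {d1} = S1' - {d1}" using part1[OF sub(1,5)] part1[OF sub(3,7)] S by simp
  then have "S1 = S1'" by (rule spanning_tree_eq_if_Diff_eq[OF mg1 trees1(1,3)])
  moreover have "T1 - {d1} = T1' - {d1}" using part1[OF sub(2,6)] part1[OF sub(4,8)] T by simp
  then have "T1 = T1'" by (rule spanning_tree_eq_if_Diff_eq[OF mg1 trees1(2,4)])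
  moreover have "S2 - {d2} = S2' - {d2}" using part2[OF sub(1,5)] part2[OF sub(3,7)] S by simp
  then have "S2 = S2'" by (rule spanning_tree_eq_if_Diff_eq[OF mg2 trees2(1,3)])
  moreover have "T2 - {d2} = T2' - {d2}" using part2[OF sub(2,6)] part2[OF sub(4,8)] T by simp
  then have "T2 = T2'" by (rule spanning_tree_eq_if_Diff_eq[OF mg2 trees2(2,4)])
  ultimately show "x = y" unfolding xy by simp
qed

lemma card_Int_split:
  assumes "finite X" "X \<subseteq> A \<union> B" "A \<inter> B = {}"
  shows "card X = card (X \<inter> A) + card (X \<inter> B)"
proof -
  have "X = (X \<inter> A) \<union> (X \<inter> B)" using assms(2) by blast
  then show ?thesis using assms(1,3) card_Un_disjoint[of "X \<inter> A" "X \<inter> B"] by auto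
qed

text \<open>Edge counting decides, for each tree of a pair, on which side it uses the virtual edge.\<close>
lemma tree_pairs_card_cases:
  assumes sum: "two_clique_sum V E ends V1 E1 ends1 d1 V2 E2 ends2 d2"
    and mg: "multigraph V E ends" "multigraph V1 E1 ends1" "multigraph V2 E2 ends2"
    and bisp: "bispanning V1 E1 ends1" "bispanning V2 E2 ends2"
    and st: "(S, T) \<in> tree_pairs V E ends"
  shows "card (S \<inter> E1) + 1 = card V1 \<and> card (T \<inter> E1) + 2 = card V1 \<and>
      card (S \<inter> E2) + 2 = card V2 \<and> card (T \<inter> E2) + 1 = card V2
    \<or> card (T \<inter> E1) + 1 = card V1 \<and> card (S \<inter> E1) + 2 = card V1 \<and>
      card (T \<inter> E2) + 2 = card V2 \<and> card (S \<inter> E2) + 1 = card V2"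
proof -
  note E = two_clique_sum_edges[OF sum]
  note sum' = two_clique_sum_sym[OF sum]
  have t: "spanning_tree V E ends S" "spanning_tree V E ends T" "S \<inter> T = {}" "S \<union> T = E"
    using st unfolding tree_pairs_def by auto
  have fin: "finite E" "finite E1" "finite E2" using mg unfolding multigraph_def by auto
  then have "finite S" "finite T" using t(4) by (auto intro: finite_subset)
  moreover have "S \<subseteq> E1 \<union> E2" "T \<subseteq> E1 \<union> E2" using t(4) E(4) by blast+
  ultimately have "card S = card (S \<inter> E1) + card (S \<inter> E2)" "card T = card (T \<inter> E1) + card (T \<inter> E2)"
    by (simp_all add: card_Int_split[OF _ _ E(3)])
  moreover have "card (E1 - {d1}) = card (S \<inter> E1) + card (T \<inter> E1)"
  proof -
    have "(E1 - {d1}) \<inter> S = S \<inter> E1" "(E1 - {d1}) \<inter> T = T \<inter> E1" "E1 - {d1} \<subseteq> S \<union> T"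
      using t(4) E by blast+
    then show ?thesis using card_Int_split[OF _ _ t(3), of "E1 - {d1}"] fin(2) by simp
  qed
  moreover have "card (E2 - {d2}) = card (S \<inter> E2) + card (T \<inter> E2)"
  proof -
    have "(E2 - {d2}) \<inter> S = S \<inter> E2" "(E2 - {d2}) \<inter> T = T \<inter> E2" "E2 - {d2} \<subseteq> S \<union> T"
      using t(4) E by blast+
    then show ?thesis using card_Int_split[OF _ _ t(3), of "E2 - {d2}"] fin(3) by simp
  qed
  moreover have "Suc (card (E1 - {d1})) = card E1" by (rule card_Suc_Diff1[OF fin(2) E(1)])
  moreover have "Suc (card (E2 - {d2})) = card E2" by (rule card_Suc_Diff1[OF fin(3) E(2)])
  ultimately show ?thesis
    using spanning_tree_card[OF mg(1) t(1)] spanning_tree_card[OF mg(1) t(2)]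
      spanning_tree_restrict(1)[OF sum mg(2,3) t(1)] spanning_tree_restrict(1)[OF sum mg(2,3) t(2)]
      spanning_tree_restrict(1)[OF sum' mg(3,2) t(1)] spanning_tree_restrict(1)[OF sum' mg(3,2) t(2)]
      bispanning_card_edges[OF bisp(1)] bispanning_card_edges[OF bisp(2)]
      two_clique_sum_card_vertices[OF sum mg(2,3)]
    by linarith
qed

lemma tree_pairs_split_oriented:
  assumes sum: "two_clique_sum V E ends V1 E1 ends1 d1 V2 E2 ends2 d2"
    and mg: "multigraph V1 E1 ends1" "multigraph V2 E2 ends2"
    and st: "(S, T) \<in> tree_pairs V E ends"
    and c: "card (S \<inter> E1) + 1 = card V1" "card (T \<inter> E1) + 2 = card V1"
      "card (S \<inter> E2) + 2 = card V2" "card (T \<inter> E2) + 1 = card V2"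
  shows "((S \<inter> E1, T \<inter> E1 \<union> {d1}), (S \<inter> E2 \<union> {d2}, T \<inter> E2)) \<in> V_eta V1 E1 ends1 d1 V2 E2 ends2 d2"
    and "glue_pairs d1 d2 ((S \<inter> E1, T \<inter> E1 \<union> {d1}), (S \<inter> E2 \<union> {d2}, T \<inter> E2)) = (S, T)"
proof -
  note E = two_clique_sum_edges[OF sum]
  note sum' = two_clique_sum_sym[OF sum]
  have t: "spanning_tree V E ends S" "spanning_tree V E ends T" "S \<inter> T = {}" "S \<union> T = E"
    using st unfolding tree_pairs_def by auto
  have "S \<inter> E1 \<inter> (T \<inter> E1 \<union> {d1}) = {}" "S \<inter> E1 \<union> (T \<inter> E1 \<union> {d1}) = E1"
    "(S \<inter> E2 \<union> {d2}) \<inter> (T \<inter> E2) = {}" "S \<inter> E2 \<union> {d2} \<union> T \<inter> E2 = E2"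
    using t(3,4) E by blast+
  then have "(S \<inter> E1, T \<inter> E1 \<union> {d1}) \<in> tree_pairs V1 E1 ends1"
    "(S \<inter> E2 \<union> {d2}, T \<inter> E2) \<in> tree_pairs V2 E2 ends2"
    using spanning_tree_restrict(2)[OF sum mg t(1) c(1)] spanning_tree_restrict(3)[OF sum mg t(2) c(2)]
      spanning_tree_restrict(3)[OF sum' mg(2,1) t(1) c(3)]
      spanning_tree_restrict(2)[OF sum' mg(2,1) t(2) c(4)]
    unfolding tree_pairs_def by simp_all
  moreover have "d1 \<notin> S \<inter> E1" "d2 \<notin> T \<inter> E2" using t(4) E by blast+
  ultimately show "((S \<inter> E1, T \<inter> E1 \<union> {d1}), (S \<inter> E2 \<union> {d2}, T \<inter> E2)) \<in> V_eta V1 E1 ends1 d1 V2 E2 ends2 d2"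
    unfolding V_eta_def by simp
  show "glue_pairs d1 d2 ((S \<inter> E1, T \<inter> E1 \<union> {d1}), (S \<inter> E2 \<union> {d2}, T \<inter> E2)) = (S, T)"
    unfolding glue_pairs_def using t(4) E by auto
qed

lemma tree_pairs_subset_glue_pairs_image:
  assumes sum: "two_clique_sum V E ends V1 E1 ends1 d1 V2 E2 ends2 d2"
    and mg: "multigraph V E ends" "multigraph V1 E1 ends1" "multigraph V2 E2 ends2"
    and bisp: "bispanning V1 E1 ends1" "bispanning V2 E2 ends2"
  shows "tree_pairs V E ends \<subseteq> glue_pairs d1 d2 ` V_eta V1 E1 ends1 d1 V2 E2 ends2 d2"
proof
  fix st assume "st \<in> tree_pairs V E ends"
  then obtain S T where st: "st = (S, T)" "(S, T) \<in> tree_pairs V E ends" by (metis prod.exhaust)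
  from tree_pairs_card_cases[OF sum mg bisp st(2)]
  show "st \<in> glue_pairs d1 d2 ` V_eta V1 E1 ends1 d1 V2 E2 ends2 d2"
  proof (elim disjE conjE)
    assume "card (S \<inter> E1) + 1 = card V1" "card (T \<inter> E1) + 2 = card V1"
      "card (S \<inter> E2) + 2 = card V2" "card (T \<inter> E2) + 1 = card V2"
    note split = tree_pairs_split_oriented[OF sum mg(2,3) st(2) this]
    show ?thesis
      unfolding st(1) by (rule image_eqI[of _ "glue_pairs d1 d2", OF split(2)[symmetric] split(1)])
  next
    assume "card (T \<inter> E1) + 1 = card V1" "card (S \<inter> E1) + 2 = card V1"
      "card (T \<inter> E2) + 2 = card V2" "card (S \<inter> E2) + 1 = card V2"
    note split = tree_pairs_split_oriented[OF sum mg(2,3) tree_pairs_swap[OF st(2)] this]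
    have "(S, T) = prod.swap (glue_pairs d1 d2 ((T \<inter> E1, S \<inter> E1 \<union> {d1}), (T \<inter> E2 \<union> {d2}, S \<inter> E2)))"
      using split(2) by simp
    also have "\<dots> = glue_pairs d1 d2 ((S \<inter> E1 \<union> {d1}, T \<inter> E1), (S \<inter> E2, T \<inter> E2 \<union> {d2}))"
      by (rule glue_pairs_swap)
    finally show ?thesis
      unfolding st(1) by (rule image_eqI[of _ "glue_pairs d1 d2", OF _ V_eta_swap[OF split(1)]])
  qed
qed

theorem mainTheorem19:
  fixes V :: "'v set" and E :: "'e set" and ends :: "'e \<Rightarrow> 'v set"
    and V1 :: "'v1 set" and E1 :: "'e set" and ends1 :: "'e \<Rightarrow> 'v1 set" and d1 :: 'e
    and V2 :: "'v2 set" and E2 :: "'e set" and ends2 :: "'e \<Rightarrow> 'v2 set" and d2 :: 'e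
  assumes "multigraph V E ends"
    and "atomic V E ends"
    and "vertex_connectivity V E ends = 2"
    and "simple_graph V1 E1 ends1" and "bispanning V1 E1 ends1"
    and "simple_graph V2 E2 ends2" and "bispanning V2 E2 ends2"
    and "two_clique_sum V E ends V1 E1 ends1 d1 V2 E2 ends2 d2"
  shows "\<exists>\<phi>. bij_betw \<phi> (tree_pairs V E ends) (V_eta V1 E1 ends1 d1 V2 E2 ends2 d2)"
proof -
  note sum = assms(8)
  have mg: "multigraph V E ends" "multigraph V1 E1 ends1" "multigraph V2 E2 ends2"
    using assms(1,4,6) unfolding simple_graph_def by simp_all
  have "glue_pairs d1 d2 ` V_eta V1 E1 ends1 d1 V2 E2 ends2 d2 \<subseteq> tree_pairs V E ends"
    using glue_pairs_in_tree_pairs[OF sum mg] by blast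
  then have "bij_betw (glue_pairs d1 d2) (V_eta V1 E1 ends1 d1 V2 E2 ends2 d2) (tree_pairs V E ends)"
    unfolding bij_betw_def
    using inj_on_glue_pairs[OF sum mg(2,3)] tree_pairs_subset_glue_pairs_image[OF sum mg assms(5,7)]
    by (simp add: subset_antisym)
  then show ?thesis using bij_betw_inv_into by blast
qed

end
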